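(* Let $P$ be a weakly ranked poset, $\kappa\in\mathscr{I}(P)$ a $P$-kernel, and $Z=g\kappa f$ its $Z$-function, where $f,g$ are its right and left KLS-functions. Let $P^*$ be the opposite weakly ranked poset. Then $\kappa^*$ is a $P^*$-kernel and $Z^*\in\mathscr{I}(P^* )$ is the $Z$-function associated with $\kappa^*$.
   Context: A weakly ranked poset is a locally finite poset $P$ (all intervals finite) with a weak rank function: integers $r_{xy}$ for $x\le y$ with $r_{xy}>0$ for $x<y$ and $r_{xy}+r_{yz}=r_{xz}$. $I(P)=\prod_{x\le y}\mathbb{Z}[t]$ with components $f_{xy}(t)$ is a ring under convolution $(fg)_{xz}=\sum_{x\le y\le z}f_{xy}g_{yz}$ with identity $\delta$. $\mathscr{I}(P)$ is the subring of $f$ with $\deg f_{xy}\le r_{xy}$; involution $\bar f_{xy}(t)=t^{r_{xy}}f_{xy}(t^{-1})$. $\mathscr{I}_{1/2}(P)$: $f\in\mathscr{I}(P)$ with $f_{xx}=1$ and $\deg f_{xy}<r_{xy}/2$ for $x<y$. A $P$-kernel is $\kappa\in\mathscr{I}(P)$ with $\kappa_{xx}=1$ for all $x$ and $\kappa^{-1}=\bar\kappa$. For a $P$-kernel $\kappa$ there are unique $f,g\in\mathscr{I}_{1/2}(P)$ with $\bar f=\kappa f$, $\bar g=g\kappa$ (right and left KLS-functions); the $Z$-function is $Z:=g\kappa f$. The opposite $P^*$ has $y\le x$ in $P^*$ iff $x\le y$ in $P$, with $r^*_{yx}=r_{xy}$; for $f\in\mathscr{I}(P)$, $f^*\in\mathscr{I}(P^*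 )$ is defined by $f^*_{yx}:=f_{xy}$. *)

theory Defs
  imports "HOL-Computational_Algebra.Polynomial"
begin

text \<open>Elements of the incidence algebra I(P) are functions 'a => 'a => int poly; only
their values on pairs (x,y) in P with le x y matter.\<close>

definition weakly_ranked_poset ::
  "'a set \<Rightarrow> ('a \<Rightarrow> 'a \<Rightarrow> bool) \<Rightarrow> ('a \<Rightarrow> 'a \<Rightarrow> int) \<Rightarrow> bool" where
  "weakly_ranked_poset P le r \<longleftrightarrow>
     (\<forall>x\<in>P. le x x) \<and>
     (\<forall>x\<in>P. \<forall>y\<in>P. le x y \<and> le y x \<longrightarrow> x = y) \<and>
     (\<forall>x\<in>P. \<forall>y\<in>P. \<forall>z\<in>P. le x y \<and> le y z \<longrightarrow> le x z) \<and>
     (\<forall>x\<in>P. \<forall>y\<in>P. finite {z\<in>P. le x z \<and> le z y}) \<and>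
     (\<forall>x\<in>P. \<forall>y\<in>P. le x y \<and> x \<noteq> y \<longrightarrow> r x y > 0) \<and>
     (\<forall>x\<in>P. \<forall>y\<in>P. \<forall>z\<in>P. le x y \<and> le y z \<longrightarrow> r x y + r y z = r x z)"

definition conv ::
  "'a set \<Rightarrow> ('a \<Rightarrow> 'a \<Rightarrow> bool) \<Rightarrow> ('a \<Rightarrow> 'a \<Rightarrow> int poly) \<Rightarrow> ('a \<Rightarrow> 'a \<Rightarrow> int poly)
     \<Rightarrow> ('a \<Rightarrow> 'a \<Rightarrow> int poly)" where
  "conv P le f g = (\<lambda>x z. \<Sum>y\<in>{y\<in>P. le x y \<and> le y z}. f x y * g y z)"

definition delta :: "'a \<Rightarrow> 'a \<Rightarrow> int poly" where
  "delta = (\<lambda>x y. if x = y then 1 else 0)"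

definition eq_on ::
  "'a set \<Rightarrow> ('a \<Rightarrow> 'a \<Rightarrow> bool) \<Rightarrow> ('a \<Rightarrow> 'a \<Rightarrow> int poly) \<Rightarrow> ('a \<Rightarrow> 'a \<Rightarrow> int poly) \<Rightarrow> bool" where
  "eq_on P le f g \<longleftrightarrow> (\<forall>x\<in>P. \<forall>y\<in>P. le x y \<longrightarrow> f x y = g x y)"

text \<open>t^n p(t^{-1}) for a polynomial p of degree at most n.\<close>
definition bar_poly :: "nat \<Rightarrow> int poly \<Rightarrow> int poly" where
  "bar_poly n p = (\<Sum>i\<le>n. monom (coeff p i) (n - i))"

definition bar :: "('a \<Rightarrow> 'a \<Rightarrow> int) \<Rightarrow> ('a \<Rightarrow> 'a \<Rightarrow> int poly) \<Rightarrow> ('a \<Rightarrow> 'a \<Rightarrow> int poly)" where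
  "bar r f = (\<lambda>x y. bar_poly (nat (r x y)) (f x y))"

definition in_scrI ::
  "'a set \<Rightarrow> ('a \<Rightarrow> 'a \<Rightarrow> bool) \<Rightarrow> ('a \<Rightarrow> 'a \<Rightarrow> int) \<Rightarrow> ('a \<Rightarrow> 'a \<Rightarrow> int poly) \<Rightarrow> bool" where
  "in_scrI P le r f \<longleftrightarrow> (\<forall>x\<in>P. \<forall>y\<in>P. le x y \<longrightarrow> int (degree (f x y)) \<le> r x y)"

definition in_scrI_half ::
  "'a set \<Rightarrow> ('a \<Rightarrow> 'a \<Rightarrow> bool) \<Rightarrow> ('a \<Rightarrow> 'a \<Rightarrow> int) \<Rightarrow> ('a \<Rightarrow> 'a \<Rightarrow> int poly) \<Rightarrow> bool" where
  "in_scrI_half P le r f \<longleftrightarrow> in_scrI P le r f \<and> (\<forall>x\<in>P. f x x = 1) \<and>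
     (\<forall>x\<in>P. \<forall>y\<in>P. le x y \<and> x \<noteq> y \<longrightarrow> 2 * int (degree (f x y)) < r x y)"

definition is_kernel ::
  "'a set \<Rightarrow> ('a \<Rightarrow> 'a \<Rightarrow> bool) \<Rightarrow> ('a \<Rightarrow> 'a \<Rightarrow> int) \<Rightarrow> ('a \<Rightarrow> 'a \<Rightarrow> int poly) \<Rightarrow> bool" where
  "is_kernel P le r \<kappa> \<longleftrightarrow> in_scrI P le r \<kappa> \<and> (\<forall>x\<in>P. \<kappa> x x = 1) \<and>
     eq_on P le (conv P le \<kappa> (bar r \<kappa>)) delta \<and>
     eq_on P le (conv P le (bar r \<kappa>) \<kappa>) delta"

definition right_KLS ::
  "'a set \<Rightarrow> ('a \<Rightarrow> 'a \<Rightarrow> bool) \<Rightarrow> ('a \<Rightarrow> 'a \<Rightarrow> int) \<Rightarrow> ('a \<Rightarrow> 'a \<Rightarrow> int poly)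
     \<Rightarrow> ('a \<Rightarrow> 'a \<Rightarrow> int poly) \<Rightarrow> bool" where
  "right_KLS P le r \<kappa> f \<longleftrightarrow> in_scrI_half P le r f \<and> eq_on P le (bar r f) (conv P le \<kappa> f)"

definition left_KLS ::
  "'a set \<Rightarrow> ('a \<Rightarrow> 'a \<Rightarrow> bool) \<Rightarrow> ('a \<Rightarrow> 'a \<Rightarrow> int) \<Rightarrow> ('a \<Rightarrow> 'a \<Rightarrow> int poly)
     \<Rightarrow> ('a \<Rightarrow> 'a \<Rightarrow> int poly) \<Rightarrow> bool" where
  "left_KLS P le r \<kappa> g \<longleftrightarrow> in_scrI_half P le r g \<and> eq_on P le (bar r g) (conv P le g \<kappa>)"

text \<open>Z is the Z-function of kappa: the right and left KLS-functions exist and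
Z = g kappa f for (the unique) such f, g.\<close>
definition is_Z_function ::
  "'a set \<Rightarrow> ('a \<Rightarrow> 'a \<Rightarrow> bool) \<Rightarrow> ('a \<Rightarrow> 'a \<Rightarrow> int) \<Rightarrow> ('a \<Rightarrow> 'a \<Rightarrow> int poly)
     \<Rightarrow> ('a \<Rightarrow> 'a \<Rightarrow> int poly) \<Rightarrow> bool" where
  "is_Z_function P le r \<kappa> Z \<longleftrightarrow>
     (\<exists>f g. right_KLS P le r \<kappa> f \<and> left_KLS P le r \<kappa> g) \<and>
     (\<forall>f g. right_KLS P le r \<kappa> f \<and> left_KLS P le r \<kappa> g \<longrightarrow>
        eq_on P le Z (conv P le (conv P le g \<kappa>) f))"

definition opp_le :: "('a \<Rightarrow> 'a \<Rightarrow> bool) \<Rightarrow> ('a \<Rightarrow> 'a \<Rightarrow> bool)" where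
  "opp_le le = (\<lambda>y x. le x y)"

definition opp_rank :: "('a \<Rightarrow> 'a \<Rightarrow> int) \<Rightarrow> ('a \<Rightarrow> 'a \<Rightarrow> int)" where
  "opp_rank r = (\<lambda>y x. r x y)"

definition star :: "('a \<Rightarrow> 'a \<Rightarrow> int poly) \<Rightarrow> ('a \<Rightarrow> 'a \<Rightarrow> int poly)" where
  "star f = (\<lambda>y x. f x y)"

end

theory Submission
  imports Defs
begin

text \<open>Transposition f \<mapsto> f* is an anti-isomorphism from I(P) to I(P*) that commutes with
  the bar involution and preserves degrees and ranks, so it carries P-kernels to P*-kernels and
  exchanges the roles of right and left KLS-functions: the right and left KLS-functions of
  \<kappa>* are g* and f*. Hence the Z-function of \<kappa>* is f* \<kappa>* g* = (g (\<kappa> f))*, which equals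
  Z* = ((g \<kappa>) f)* by associativity of convolution.\<close>

lemma star_star [simp]: "star (star f) = f"
  by (simp add: star_def)

lemma star_delta [simp]: "star delta = delta"
  by (auto simp: star_def delta_def intro!: ext)

lemma conv_opp_star: "conv P (opp_le le) (star f) (star g) = star (conv P le g f)"
  unfolding conv_def star_def opp_le_def
  by (intro ext sum.cong) (auto simp: mult.commute)

lemma bar_opp_star: "bar (opp_rank r) (star f) = star (bar r f)"
  by (simp add: bar_def star_def opp_rank_def)

lemma eq_on_opp_star: "eq_on P (opp_le le) (star f) (star g) \<longleftrightarrow> eq_on P le f g"
  unfolding eq_on_def star_def opp_le_def by auto

lemma in_scrI_opp_star: "in_scrI P (opp_le le) (opp_rank r) (star f) \<longleftrightarrow> in_scrI P le r f"
  unfolding in_scrI_def star_def opp_le_def opp_rank_def by auto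

lemma in_scrI_half_opp_star:
  "in_scrI_half P (opp_le le) (opp_rank r) (star f) \<longleftrightarrow> in_scrI_half P le r f"
  unfolding in_scrI_half_def in_scrI_opp_star
  unfolding star_def opp_le_def opp_rank_def by auto

lemma is_kernel_opp_star:
  "is_kernel P (opp_le le) (opp_rank r) (star \<kappa>) \<longleftrightarrow> is_kernel P le r \<kappa>"
proof -
  have "(\<forall>x\<in>P. star \<kappa> x x = 1) \<longleftrightarrow> (\<forall>x\<in>P. \<kappa> x x = 1)"
    by (simp add: star_def)
  then show ?thesis
    unfolding is_kernel_def in_scrI_opp_star bar_opp_star conv_opp_star
    by (subst (1 2) star_delta [symmetric], unfold eq_on_opp_star) blast
qed

lemma right_KLS_opp_star:
  "right_KLS P (opp_le le) (opp_rank r) (star \<kappa>) (star g) \<longleftrightarrow> left_KLS P le r \<kappa> g"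
  unfolding right_KLS_def left_KLS_def in_scrI_half_opp_star bar_opp_star conv_opp_star
    eq_on_opp_star ..

lemma left_KLS_opp_star:
  "left_KLS P (opp_le le) (opp_rank r) (star \<kappa>) (star f) \<longleftrightarrow> right_KLS P le r \<kappa> f"
  unfolding right_KLS_def left_KLS_def in_scrI_half_opp_star bar_opp_star conv_opp_star
    eq_on_opp_star ..

lemma conv_assoc:
  assumes trans: "\<And>x y z. x \<in> P \<Longrightarrow> y \<in> P \<Longrightarrow> z \<in> P \<Longrightarrow> le x y \<Longrightarrow> le y z \<Longrightarrow> le x z"
    and locally_finite: "\<And>x z. x \<in> P \<Longrightarrow> z \<in> P \<Longrightarrow> finite {y\<in>P. le x y \<and> le y z}"
  shows "eq_on P le (conv P le g (conv P le k f)) (conv P le (conv P le g k) f)"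
  unfolding eq_on_def
proof (intro ballI impI)
  fix x z assume xz: "x \<in> P" "z \<in> P" "le x z"
  define I where "I = {y\<in>P. le x y \<and> le y z}"
  have fin: "finite I"
    using locally_finite xz unfolding I_def by blast
  define summand where "summand y w = (if le y w then g x y * (k y w * f w z) else 0)" for y w
  have "conv P le g (conv P le k f) x z = (\<Sum>y\<in>I. \<Sum>w\<in>I. summand y w)"
    unfolding conv_def I_def[symmetric]
  proof (rule sum.cong[OF refl])
    fix y assume "y \<in> I"
    then have "{w\<in>P. le y w \<and> le w z} = {w\<in>I. le y w}"
      using trans xz unfolding I_def by blast
    then show "g x y * (\<Sum>w\<in>{w\<in>P. le y w \<and> le w z}. k y w * f w z) = (\<Sum>w\<in>I. summand y w)"
      by (simp add: summand_def sum.inter_filter[OF fin] sum_distrib_left if_distrib cong: if_cong)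
  qed
  also have "\<dots> = (\<Sum>w\<in>I. \<Sum>y\<in>I. summand y w)"
    by (rule sum.swap)
  also have "\<dots> = conv P le (conv P le g k) f x z"
    unfolding conv_def I_def[symmetric]
  proof (rule sum.cong[OF refl])
    fix w assume "w \<in> I"
    then have "{y\<in>P. le x y \<and> le y w} = {y\<in>I. le y w}"
      using trans xz unfolding I_def by blast
    then show "(\<Sum>y\<in>I. summand y w) = (\<Sum>y\<in>{y\<in>P. le x y \<and> le y w}. g x y * k y w) * f w z"
      by (simp add: summand_def sum.inter_filter[OF fin] sum_distrib_right mult.assoc,
          intro sum.cong) auto
  qed
  finally show "conv P le g (conv P le k f) x z = conv P le (conv P le g k) f x z" .
qed

lemma is_Z_function_opp_star:
  assumes assoc: "\<And>f g. eq_on P le (conv P le g (conv P le \<kappa> f)) (conv P le (conv P le g \<kappa>) f)"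
    and Z: "is_Z_function P le r \<kappa> Z"
  shows "is_Z_function P (opp_le le) (opp_rank r) (star \<kappa>) (star Z)"
  unfolding is_Z_function_def
proof (intro conjI allI impI)
  from Z obtain f g where "right_KLS P le r \<kappa> f" "left_KLS P le r \<kappa> g"
    unfolding is_Z_function_def by blast
  then show "\<exists>f g. right_KLS P (opp_le le) (opp_rank r) (star \<kappa>) f
      \<and> left_KLS P (opp_le le) (opp_rank r) (star \<kappa>) g"
    by (metis right_KLS_opp_star left_KLS_opp_star)
next
  fix f' g'
  assume "right_KLS P (opp_le le) (opp_rank r) (star \<kappa>) f'
      \<and> left_KLS P (opp_le le) (opp_rank r) (star \<kappa>) g'"
  then have "left_KLS P le r \<kappa> (star f')" "right_KLS P le r \<kappa> (star g')"
    by (metis star_star right_KLS_opp_star left_KLS_opp_star)+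
  with Z have "eq_on P le Z (conv P le (conv P le (star f') \<kappa>) (star g'))"
    unfolding is_Z_function_def by blast
  with assoc have "eq_on P le Z (conv P le (star f') (conv P le \<kappa> (star g')))"
    unfolding eq_on_def by metis
  moreover have "conv P (opp_le le) (conv P (opp_le le) g' (star \<kappa>)) f'
      = star (conv P le (star f') (conv P le \<kappa> (star g')))"
    by (metis star_star conv_opp_star)
  ultimately show "eq_on P (opp_le le) (star Z) (conv P (opp_le le) (conv P (opp_le le) g' (star \<kappa>)) f')"
    by (simp add: eq_on_opp_star)
qed

theorem proposition2p9:
  fixes P :: "'a set" and le :: "'a \<Rightarrow> 'a \<Rightarrow> bool" and r :: "'a \<Rightarrow> 'a \<Rightarrow> int"
    and \<kappa> Z :: "'a \<Rightarrow> 'a \<Rightarrow> int poly"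
  assumes "weakly_ranked_poset P le r"
    and "is_kernel P le r \<kappa>"
    and "is_Z_function P le r \<kappa> Z"
  shows "is_kernel P (opp_le le) (opp_rank r) (star \<kappa>)
       \<and> is_Z_function P (opp_le le) (opp_rank r) (star \<kappa>) (star Z)"
proof
  show "is_kernel P (opp_le le) (opp_rank r) (star \<kappa>)"
    using assms(2) by (simp add: is_kernel_opp_star)
  have "eq_on P le (conv P le g (conv P le \<kappa> f)) (conv P le (conv P le g \<kappa>) f)" for f g
    using assms(1) unfolding weakly_ranked_poset_def by (intro conv_assoc) blast+
  then show "is_Z_function P (opp_le le) (opp_rank r) (star \<kappa>) (star Z)"
    using assms(3) by (rule is_Z_function_opp_star)
qed

end
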